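(* Let $n\ge1$ and let $\mathbf{R}$ be a subalgebra of $\mathbf{P\L}_n\times\mathbf{P\L}_n$. Suppose $\mathbf{R}$ is not of the form $\mathbf{S}_1\times\mathbf{S}_2$ with $\mathbf{S}_1,\mathbf{S}_2$ subalgebras of $\mathbf{P\L}_n$. Then one of the following holds: - $\mathbf{R}\subseteq{\le}=\{(x,y):x\le y\}$; - $\mathbf{R}\subseteq{\ge}=\{(x,y):x\ge y\}$.
   Context: For $n\ge 1$, the algebra $\mathbf{P\L}_n=\langle\{0,\tfrac1n,\dots,\tfrac{n-1}{n},1\},\wedge,\vee,\odot,\oplus,0,1\rangle$ has $\wedge=\min$, $\vee=\max$, $x\odot y=\max\{0,x+y-1\}$ and $x\oplus y=\min\{1,x+y\}$. The order $\le$ is the usual numerical order. Binary relations on $\mathbf{P\L}_n$ are identified with subsets of $\mathbf{P\L}_n\times\mathbf{P\L}_n$, and operations on $\mathbf{P\L}_n\times\mathbf{P\L}_n$ are computed componentwise. *)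

theory Defs
  imports Complex_Main
begin

definition PL :: "nat \<Rightarrow> rat set" where
  "PL n = {of_nat k / of_nat n | k. k \<le> n}"

definition luk_conj :: "rat \<Rightarrow> rat \<Rightarrow> rat" where
  "luk_conj x y = max 0 (x + y - 1)"

definition luk_disj :: "rat \<Rightarrow> rat \<Rightarrow> rat" where
  "luk_disj x y = min 1 (x + y)"

definition is_subalg :: "nat \<Rightarrow> rat set \<Rightarrow> bool" where
  "is_subalg n S \<longleftrightarrow> S \<subseteq> PL n \<and> 0 \<in> S \<and> 1 \<in> S \<and>
     (\<forall>x\<in>S. \<forall>y\<in>S. min x y \<in> S \<and> max x y \<in> S \<and> luk_conj x y \<in> S \<and> luk_disj x y \<in> S)"

definition is_subalg2 :: "nat \<Rightarrow> (rat \<times> rat) set \<Rightarrow> bool" where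
  "is_subalg2 n R \<longleftrightarrow> R \<subseteq> PL n \<times> PL n \<and> (0, 0) \<in> R \<and> (1, 1) \<in> R \<and>
     (\<forall>(x1, x2)\<in>R. \<forall>(y1, y2)\<in>R.
        (min x1 y1, min x2 y2) \<in> R \<and> (max x1 y1, max x2 y2) \<in> R \<and>
        (luk_conj x1 y1, luk_conj x2 y2) \<in> R \<and> (luk_disj x1 y1, luk_disj x2 y2) \<in> R)"

end

theory Submission imports Defs begin

text \<open>If R contains a pair (a, b) with a < b, then repeatedly applying x \<oplus> x = min 1 (2x)
  (when b \<le> 1/2) or x \<odot> x = max 0 (2x - 1) (when a \<ge> 1/2) doubles the gap b - a, so eventually
  R contains (0, 1); if a < 1/2 < b, one doubling yields a pair (x, 1), and squaring then drives
  x down to 0. Symmetrically a pair (a, b) with a > b yields (1, 0). Meeting an arbitrary pair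
  (x, y) with (1, 0) and another (u, v) with (0, 1) under min and then max gives (x, v), so R is
  the product of its two projections, which are subalgebras.\<close>

lemma halving_induct [consumes 1, case_names big half]:
  fixes d :: "'a::archimedean_field"
  assumes "0 < d"
    and big: "\<And>d. 1 \<le> d \<Longrightarrow> P d"
    and half: "\<And>d. 0 < d \<Longrightarrow> P (2 * d) \<Longrightarrow> P d"
  shows "P d"
proof -
  have doubling: "P d" if "0 < d" "1 \<le> 2 ^ k * d" for k d
    using that
  proof (induction k arbitrary: d)
    case 0
    then show ?case using big by simp
  next
    case (Suc k)
    then have "P (2 * d)" by (simp add: mult.assoc)
    then show ?case using half \<open>0 < d\<close> by blast
  qed
  obtain k :: nat where "1 < of_nat k * d"
    using ex_less_of_nat_mult[OF \<open>0 < d\<close>] by blast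
  moreover have "of_nat k * d \<le> 2 ^ k * d"
    using \<open>0 < d\<close> by (intro mult_right_mono) (simp_all add: less_imp_le)
  ultimately have "1 \<le> 2 ^ k * d" by linarith
  then show ?thesis using doubling \<open>0 < d\<close> by blast
qed

definition closed_pairwise :: "('a \<Rightarrow> 'a \<Rightarrow> 'a) \<Rightarrow> ('a \<times> 'a) set \<Rightarrow> bool" where
  "closed_pairwise f R \<longleftrightarrow> (\<forall>(x1, x2)\<in>R. \<forall>(y1, y2)\<in>R. (f x1 y1, f x2 y2) \<in> R)"

lemma closed_pairwiseD:
  "closed_pairwise f R \<Longrightarrow> (x1, x2) \<in> R \<Longrightarrow> (y1, y2) \<in> R \<Longrightarrow> (f x1 y1, f x2 y2) \<in> R"
  unfolding closed_pairwise_def by fast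

lemma closed_pairwise_swap: "closed_pairwise f R \<Longrightarrow> closed_pairwise f (prod.swap ` R)"
  unfolding closed_pairwise_def by fastforce

lemma is_subalg2_closed_pairwise:
  assumes "is_subalg2 n R"
  shows "closed_pairwise min R" "closed_pairwise max R"
    "closed_pairwise luk_conj R" "closed_pairwise luk_disj R"
  using assms unfolding is_subalg2_def closed_pairwise_def by fast+

lemma luk_conj_self: "luk_conj x x = max 0 (2 * x - 1)"
  by (simp add: luk_conj_def)

lemma luk_disj_self: "luk_disj x x = min 1 (2 * x)"
  by (simp add: luk_disj_def)

lemma zero_one_mem_of_mem_lt_one:
  assumes conj: "closed_pairwise luk_conj R"
    and "(x, 1) \<in> R" "0 \<le> x" "x < 1"
  shows "(0, 1) \<in> R"
proof -
  have "\<forall>x. (x, 1) \<in> R \<longrightarrow> 0 \<le> x \<longrightarrow> d \<le> 1 - x \<longrightarrow> (0, 1) \<in> R" if "0 < d" for d :: rat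
    using that
  proof (induction d rule: halving_induct)
    case (big d)
    show ?case
    proof (intro allI impI)
      fix x :: rat assume "(x, 1) \<in> R" "0 \<le> x" "d \<le> 1 - x"
      moreover from this have "x = 0" using big by linarith
      ultimately show "(0, 1) \<in> R" by simp
    qed
  next
    case (half d)
    show ?case
    proof (intro allI impI)
      fix x :: rat assume x: "(x, 1) \<in> R" "0 \<le> x" "d \<le> 1 - x"
      have squared: "(max 0 (2 * x - 1), 1) \<in> R"
        using closed_pairwiseD[OF conj x(1) x(1)] by (simp add: luk_conj_self)
      show "(0, 1) \<in> R"
      proof (cases "2 * x - 1 \<le> 0")
        case True
        then have "max 0 (2 * x - 1) = 0" by simp
        then show ?thesis using squared by simp
      next
        case False
        then have "(2 * x - 1, 1) \<in> R" "2 * d \<le> 1 - (2 * x - 1)"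
          using squared x(3) by (simp_all add: max_def)
        then show ?thesis using half.IH False by auto
      qed
    qed
  qed
  then show ?thesis using assms by force
qed

lemma zero_one_mem_of_mem_lt:
  assumes conj: "closed_pairwise luk_conj R" and disj: "closed_pairwise luk_disj R"
    and "(a, b) \<in> R" "0 \<le> a" "a < b" "b \<le> 1"
  shows "(0, 1) \<in> R"
proof -
  have "\<forall>a b. (a, b) \<in> R \<longrightarrow> 0 \<le> a \<longrightarrow> b \<le> 1 \<longrightarrow> d \<le> b - a \<longrightarrow> (0, 1) \<in> R"
    if "0 < d" for d :: rat
    using that
  proof (induction d rule: halving_induct)
    case (big d)
    show ?case
    proof (intro allI impI)
      fix a b :: rat assume "(a, b) \<in> R" "0 \<le> a" "b \<le> 1" "d \<le> b - a"
      moreover from this have "a = 0" "b = 1" using big by linarith+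
      ultimately show "(0, 1) \<in> R" by simp
    qed
  next
    case (half d)
    show ?case
    proof (intro allI impI)
      fix a b :: rat assume ab: "(a, b) \<in> R" "0 \<le> a" "b \<le> 1" "d \<le> b - a"
      have doubled: "(min 1 (2 * a), min 1 (2 * b)) \<in> R"
        using closed_pairwiseD[OF disj ab(1) ab(1)] by (simp add: luk_disj_self)
      have squared: "(max 0 (2 * a - 1), max 0 (2 * b - 1)) \<in> R"
        using closed_pairwiseD[OF conj ab(1) ab(1)] by (simp add: luk_conj_self)
      consider "b \<le> 1/2" | "1/2 \<le> a" | "a < 1/2" "1/2 < b" by linarith
      then show "(0, 1) \<in> R"
      proof cases
        case 1
        then show ?thesis using half.IH doubled ab by auto
      next
        case 2
        then show ?thesis using half.IH squared ab by auto
      next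
        case 3
        then have "(2 * a, 1) \<in> R" using doubled by simp
        then show ?thesis using zero_one_mem_of_mem_lt_one[OF conj] ab 3 by simp
      qed
    qed
  qed
  then show ?thesis using assms by force
qed

lemma one_zero_mem_of_mem_gt:
  assumes "closed_pairwise luk_conj R" "closed_pairwise luk_disj R"
    and "(a, b) \<in> R" "0 \<le> b" "b < a" "a \<le> 1"
  shows "(1, 0) \<in> R"
proof -
  have "(b, a) \<in> prod.swap ` R" using assms(3) by force
  then have "(0, 1) \<in> prod.swap ` R"
    using zero_one_mem_of_mem_lt[OF assms(1,2)[THEN closed_pairwise_swap]] assms(4-6) by blast
  then show ?thesis by force
qed

lemma eq_Times_projections:
  fixes R :: "('a::linorder \<times> 'a) set"
  assumes "closed_pairwise min R" "closed_pairwise max R"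
    and "R \<subseteq> {lo..hi} \<times> {lo..hi}" "(lo, hi) \<in> R" "(hi, lo) \<in> R"
  shows "R = fst ` R \<times> snd ` R"
proof
  show "fst ` R \<times> snd ` R \<subseteq> R"
  proof clarify
    fix x y u v assume xy: "(x, y) \<in> R" and uv: "(u, v) \<in> R"
    have bounds: "lo \<le> x" "x \<le> hi" "lo \<le> y" "lo \<le> u" "lo \<le> v" "v \<le> hi"
      using assms(3) xy uv by auto
    have "(min x hi, min y lo) \<in> R" "(min u lo, min v hi) \<in> R"
      using closed_pairwiseD[OF assms(1)] xy uv assms(4,5) by blast+
    then have "(x, lo) \<in> R" "(lo, v) \<in> R"
      using bounds by (simp_all add: min_absorb1 min_absorb2)
    then have "(max x lo, max lo v) \<in> R"
      using closed_pairwiseD[OF assms(2)] by blast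
    then show "(fst (x, y), snd (u, v)) \<in> R"
      using bounds by (simp add: max_absorb1 max_absorb2)
  qed
qed force

lemma closed_pairwise_fst_image:
  "closed_pairwise f R \<Longrightarrow> x \<in> fst ` R \<Longrightarrow> y \<in> fst ` R \<Longrightarrow> f x y \<in> fst ` R"
  by (force dest: closed_pairwiseD)

lemma closed_pairwise_snd_image:
  "closed_pairwise f R \<Longrightarrow> x \<in> snd ` R \<Longrightarrow> y \<in> snd ` R \<Longrightarrow> f x y \<in> snd ` R"
  by (force dest: closed_pairwiseD)

lemma is_subalg_fst_image:
  assumes "is_subalg2 n R"
  shows "is_subalg n (fst ` R)"
  unfolding is_subalg_def
proof (intro conjI ballI)
  note closed = is_subalg2_closed_pairwise[OF assms]
  show "fst ` R \<subseteq> PL n" "0 \<in> fst ` R" "1 \<in> fst ` R"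
    using assms unfolding is_subalg2_def by force+
  fix x y assume "x \<in> fst ` R" "y \<in> fst ` R"
  then show "min x y \<in> fst ` R" "max x y \<in> fst ` R"
      "luk_conj x y \<in> fst ` R" "luk_disj x y \<in> fst ` R"
    by (fact closed[THEN closed_pairwise_fst_image])+
qed

lemma is_subalg_snd_image:
  assumes "is_subalg2 n R"
  shows "is_subalg n (snd ` R)"
  unfolding is_subalg_def
proof (intro conjI ballI)
  note closed = is_subalg2_closed_pairwise[OF assms]
  show "snd ` R \<subseteq> PL n" "0 \<in> snd ` R" "1 \<in> snd ` R"
    using assms unfolding is_subalg2_def by force+
  fix x y assume "x \<in> snd ` R" "y \<in> snd ` R"
  then show "min x y \<in> snd ` R" "max x y \<in> snd ` R"
      "luk_conj x y \<in> snd ` R" "luk_disj x y \<in> snd ` R"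
    by (fact closed[THEN closed_pairwise_snd_image])+
qed

lemma PL_subset_unit_interval: "PL n \<subseteq> {0..1}"
  unfolding PL_def by (auto simp: divide_le_eq_1)

theorem lemma3p8:
  fixes n :: nat and R :: "(rat \<times> rat) set"
  assumes "n \<ge> 1"
    and "is_subalg2 n R"
    and "\<not> (\<exists>S1 S2. is_subalg n S1 \<and> is_subalg n S2 \<and> R = S1 \<times> S2)"
  shows "R \<subseteq> {(x, y). x \<le> y} \<or> R \<subseteq> {(x, y). x \<ge> y}"
proof (rule ccontr)
  note closed = is_subalg2_closed_pairwise[OF assms(2)]
  have unit: "R \<subseteq> {0..1} \<times> {0..1}"
    using assms(2) PL_subset_unit_interval unfolding is_subalg2_def by blast
  assume "\<not> ?thesis"
  then obtain a b c d where ab: "(a, b) \<in> R" "b < a" and cd: "(c, d) \<in> R" "c < d"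
    by (fastforce simp: subset_iff)
  have "0 \<le> b" "a \<le> 1" "0 \<le> c" "d \<le> 1"
    using unit ab(1) cd(1) by auto
  then have "(1, 0) \<in> R" "(0, 1) \<in> R"
    using one_zero_mem_of_mem_gt[OF closed(3,4) ab(1)] zero_one_mem_of_mem_lt[OF closed(3,4) cd(1)]
      ab(2) cd(2) by blast+
  then have "R = fst ` R \<times> snd ` R"
    using eq_Times_projections[OF closed(1,2) unit] by blast
  then show False
    using assms(3) is_subalg_fst_image[OF assms(2)] is_subalg_snd_image[OF assms(2)] by blast
qed

end
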